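(* Let $G$ be a connected graph and $k \ge 1$ an integer. For all $\Pi_1, \Pi_2 \in \mathrm{Part}(G,k)$ there is a sequence of at most $6(k-1)$ recombination moves (each intermediate partition lying in $\mathrm{Part}(G,k)$) that transforms $\Pi_1$ into $\Pi_2$. In particular, the configuration space $\mathcal{R}_\infty(G,k)$ is connected.
   Context: For a graph $G$ and positive integer $k$, a connected $k$-partition of $G$ is a partition of $V(G)$ into $k$ disjoint nonempty sets (districts) each inducing a connected subgraph; $\mathrm{Part}(G,k)$ is the set of these. Two distinct connected $k$-partitions $\{V_1,\dots,V_k\}$ and $\{W_1,\dots,W_k\}$ are related by a recombination move if there are indices $i,j$ and a permutation $\pi$ of $\{1,\dots,k\}$ with $V_i \cup V_j = W_{\pi(i)} \cup W_{\pi(j)}$ and $V_\ell = W_{\pi(\ell)}$ for all $\ell \notin \{i,j\}$. $\mathcal{R}_\infty(G,k)$ is the graph on $\mathrm{Part}(G,k)$ whose edges are the recombination moves. *)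

theory Defs
  imports Main
begin

definition graph :: "'a set \<Rightarrow> ('a \<Rightarrow> 'a \<Rightarrow> bool) \<Rightarrow> bool" where
  "graph V E \<longleftrightarrow> finite V \<and> (\<forall>x y. E x y \<longrightarrow> x \<in> V \<and> y \<in> V)
     \<and> (\<forall>x y. E x y \<longrightarrow> E y x) \<and> (\<forall>x. \<not> E x x)"

definition induces_connected :: "('a \<Rightarrow> 'a \<Rightarrow> bool) \<Rightarrow> 'a set \<Rightarrow> bool" where
  "induces_connected E S \<longleftrightarrow> S \<noteq> {} \<and>
     (\<forall>x\<in>S. \<forall>y\<in>S. (\<lambda>a b. E a b \<and> a \<in> S \<and> b \<in> S)\<^sup>*\<^sup>* x y)"

definition connected_graph :: "'a set \<Rightarrow> ('a \<Rightarrow> 'a \<Rightarrow> bool) \<Rightarrow> bool" where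
  "connected_graph V E \<longleftrightarrow> graph V E \<and> induces_connected E V"

definition Part :: "'a set \<Rightarrow> ('a \<Rightarrow> 'a \<Rightarrow> bool) \<Rightarrow> nat \<Rightarrow> 'a set set set" where
  "Part V E k = {P. \<Union>P = V \<and> card P = k \<and> finite P
     \<and> (\<forall>A\<in>P. \<forall>B\<in>P. A \<noteq> B \<longrightarrow> A \<inter> B = {})
     \<and> (\<forall>A\<in>P. A \<noteq> {} \<and> induces_connected E A)}"

definition recom_move :: "'a set set \<Rightarrow> 'a set set \<Rightarrow> bool" where
  "recom_move P Q \<longleftrightarrow> P \<noteq> Q \<and>
     (\<exists>A B C D. A \<in> P \<and> B \<in> P \<and> A \<noteq> B \<and> C \<in> Q \<and> D \<in> Q \<and> C \<noteq> D \<and>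
        A \<union> B = C \<union> D \<and> P - {A, B} = Q - {C, D})"

definition R_inf :: "'a set \<Rightarrow> ('a \<Rightarrow> 'a \<Rightarrow> bool) \<Rightarrow> nat \<Rightarrow> 'a set set \<Rightarrow> 'a set set \<Rightarrow> bool" where
  "R_inf V E k P Q \<longleftrightarrow> P \<in> Part V E k \<and> Q \<in> Part V E k \<and> recom_move P Q"

definition R_inf_connected :: "'a set \<Rightarrow> ('a \<Rightarrow> 'a \<Rightarrow> bool) \<Rightarrow> nat \<Rightarrow> bool" where
  "R_inf_connected V E k \<longleftrightarrow> (\<forall>P\<in>Part V E k. \<forall>Q\<in>Part V E k. (R_inf V E k)\<^sup>*\<^sup>* P Q)"

end

theory Submission
  imports Defs
begin

text \<open>Induction on \<open>k\<close>. Pick a vertex \<open>a\<close> and a smallest component \<open>C\<close> of \<open>G - a\<close>; then no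
  vertex of \<open>C\<close> separates \<open>G\<close>, and all neighbours of \<open>C\<close> lie in \<open>C \<union> {a}\<close>. Fix a spanning tree in
  every district of \<open>\<Pi>\<^sub>1\<close> and of \<open>\<Pi>\<^sub>2\<close>. The children of vertices of \<open>C\<close> lie in \<open>C \<union> {a}\<close>, so in
  each partition \<open>C\<close> has at most \<open>|C| + 1\<close> children altogether, and some \<open>v \<in> C\<close> has at most four
  children in the two forests together. Removing \<open>v\<close> splits its district into at most
  \<open>1 + #children(v)\<close> pieces, each adjacent to \<open>v\<close>; as \<open>G - v\<close> is connected, the pieces can be handed
  one recombination at a time to neighbouring districts, until \<open>{v}\<close> is a district. Doing this in
  \<open>\<Pi>\<^sub>1\<close> and in \<open>\<Pi>\<^sub>2\<close> costs at most six moves, and the remaining \<open>k - 1\<close> districts are connected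
  partitions of \<open>G - v\<close>, to which induction applies.\<close>

definition walk_in :: "('a \<Rightarrow> 'a \<Rightarrow> bool) \<Rightarrow> 'a set \<Rightarrow> 'a \<Rightarrow> 'a \<Rightarrow> bool" where
  "walk_in E S = (\<lambda>a b. E a b \<and> a \<in> S \<and> b \<in> S)\<^sup>*\<^sup>*"

lemma induces_connected_iff_walk_in:
  "induces_connected E S \<longleftrightarrow> S \<noteq> {} \<and> (\<forall>x\<in>S. \<forall>y\<in>S. walk_in E S x y)"
  unfolding induces_connected_def walk_in_def by simp

lemma walk_in_refl [simp]: "walk_in E S x x"
  unfolding walk_in_def by simp

lemma walk_in_snoc: "walk_in E S x y \<Longrightarrow> E y z \<Longrightarrow> y \<in> S \<Longrightarrow> z \<in> S \<Longrightarrow> walk_in E S x z"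
  unfolding walk_in_def by (simp add: rtranclp.rtrancl_into_rtrancl)

lemma walk_in_Cons: "E x y \<Longrightarrow> x \<in> S \<Longrightarrow> y \<in> S \<Longrightarrow> walk_in E S y z \<Longrightarrow> walk_in E S x z"
  unfolding walk_in_def by (simp add: converse_rtranclp_into_rtranclp)

lemma walk_in_trans: "walk_in E S x y \<Longrightarrow> walk_in E S y z \<Longrightarrow> walk_in E S x z"
  unfolding walk_in_def by simp

lemma walk_in_mono: "walk_in E S x y \<Longrightarrow> S \<subseteq> T \<Longrightarrow> walk_in E T x y"
  unfolding walk_in_def by (erule rtranclp_mono[THEN predicate2D, rotated]) auto

lemma walk_in_endpoints: "walk_in E S x y \<Longrightarrow> x = y \<or> x \<in> S \<and> y \<in> S"
  unfolding walk_in_def by (induction rule: rtranclp_induct) auto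

lemma walk_in_sym: "symp E \<Longrightarrow> walk_in E S x y \<Longrightarrow> walk_in E S y x"
  unfolding walk_in_def
  by (rule sympD[OF symp_rtranclp]) (auto simp: symp_def)

lemma walk_in_leaves:
  assumes "walk_in E S x y" "x \<in> T" "y \<notin> T"
  shows "\<exists>u z. u \<in> S \<inter> T \<and> z \<in> S - T \<and> E u z \<and> walk_in E (S \<inter> T) x u"
  using assms unfolding walk_in_def
proof (induction rule: converse_rtranclp_induct)
  case (step x x')
  show ?case
  proof (cases "x' \<in> T")
    case True
    with step obtain u z where "u \<in> S \<inter> T" "z \<in> S - T" "E u z"
      "(\<lambda>a b. E a b \<and> a \<in> S \<inter> T \<and> b \<in> S \<inter> T)\<^sup>*\<^sup>* x' u" by blast
    with step True show ?thesis by (blast intro: converse_rtranclp_into_rtranclp)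
  qed (use step in auto)
qed simp

lemma induces_connected_from_center:
  assumes "symp E" "c \<in> S" "\<forall>z\<in>S. walk_in E S c z"
  shows "induces_connected E S"
  using assms by (auto simp: induces_connected_iff_walk_in intro: walk_in_trans walk_in_sym)

lemma induces_connected_Un_edge:
  assumes "symp E" "induces_connected E X" "induces_connected E Y" "x \<in> X" "y \<in> Y" "E x y"
  shows "induces_connected E (X \<union> Y)"
proof (rule induces_connected_from_center[OF assms(1), of x])
  have "walk_in E (X \<union> Y) x z" if "z \<in> X" for z
    using assms(2,4) that by (auto simp: induces_connected_iff_walk_in intro: walk_in_mono)
  moreover have "walk_in E (X \<union> Y) x z" if "z \<in> Y" for z
  proof -
    have "walk_in E (X \<union> Y) y z"
      using assms(3,5) that by (auto simp: induces_connected_iff_walk_in intro: walk_in_mono)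
    then show ?thesis using assms(4-6) by (blast intro: walk_in_Cons)
  qed
  ultimately show "\<forall>z\<in>X \<union> Y. walk_in E (X \<union> Y) x z" by blast
qed (use assms in simp)

lemma induces_connected_insert_Union:
  assumes "symp E" and "\<forall>Y\<in>\<Y>. induces_connected E Y \<and> (\<exists>y\<in>Y. E v y)"
  shows "induces_connected E (insert v (\<Union>\<Y>))"
proof (rule induces_connected_from_center[OF assms(1), of v])
  show "\<forall>z\<in>insert v (\<Union>\<Y>). walk_in E (insert v (\<Union>\<Y>)) v z"
  proof
    fix z assume "z \<in> insert v (\<Union>\<Y>)"
    then consider "z = v" | Y where "Y \<in> \<Y>" "z \<in> Y" by auto
    then show "walk_in E (insert v (\<Union>\<Y>)) v z"
    proof cases
      case 2
      then obtain y where y: "y \<in> Y" "E v y" using assms(2) by blast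
      have "walk_in E Y y z" using assms(2) 2 y by (auto simp: induces_connected_iff_walk_in)
      then have "walk_in E (insert v (\<Union>\<Y>)) y z" by (rule walk_in_mono) (use 2 in auto)
      with y 2 show ?thesis by (blast intro: walk_in_Cons)
    qed simp
  qed
qed simp

definition component :: "('a \<Rightarrow> 'a \<Rightarrow> bool) \<Rightarrow> 'a set \<Rightarrow> 'a \<Rightarrow> 'a set" where
  "component E S x = {y \<in> S. walk_in E S x y}"

lemma component_self: "x \<in> S \<Longrightarrow> x \<in> component E S x"
  unfolding component_def by simp

lemma component_subset: "component E S x \<subseteq> S"
  unfolding component_def by auto

lemma component_closed: "y \<in> component E S x \<Longrightarrow> E y z \<Longrightarrow> z \<in> S \<Longrightarrow> z \<in> component E S x"
  unfolding component_def by (auto intro: walk_in_snoc)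

lemma walk_in_component:
  assumes "walk_in E S x z" "x \<in> S"
  shows "walk_in E (component E S x) x z"
  using assms(1) unfolding walk_in_def
proof (induction rule: rtranclp_induct)
  case (step y z)
  then have "y \<in> component E S x" "z \<in> component E S x"
    using assms(2) walk_in_endpoints[of E S x y]
    by (auto simp: component_def walk_in_def intro: rtranclp.rtrancl_into_rtrancl)
  with step show ?case by (simp add: rtranclp.rtrancl_into_rtrancl)
qed simp

lemma induces_connected_component:
  "symp E \<Longrightarrow> x \<in> S \<Longrightarrow> induces_connected E (component E S x)"
  by (rule induces_connected_from_center[of _ x])
    (auto simp: component_self intro: walk_in_component[unfolded component_def] simp: component_def)

lemma component_eq_if_walk_in:
  assumes "symp E" "walk_in E S x y"
  shows "component E S x = component E S y"
  using assms walk_in_sym walk_in_trans unfolding component_def by metis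

lemma components_disjoint:
  assumes "symp E" "component E S x \<noteq> component E S y"
  shows "component E S x \<inter> component E S y = {}"
proof (rule ccontr)
  assume "component E S x \<inter> component E S y \<noteq> {}"
  then obtain z where "walk_in E S x z" "walk_in E S y z" unfolding component_def by auto
  then have "component E S x = component E S y"
    using component_eq_if_walk_in[OF assms(1)] by metis
  with assms(2) show False ..
qed

lemma Union_components: "\<Union>(component E S ` S) = S"
  using component_self component_subset by fast

lemma pairwise_disjnt_components: "symp E \<Longrightarrow> pairwise disjnt (component E S ` S)"
  unfolding pairwise_def disjnt_def using components_disjoint by fast

subsection \<open>Non-separating vertices\<close>

lemma graph_symp: "graph V E \<Longrightarrow> symp E"
  unfolding graph_def symp_def by blast

lemma walk_outside_component:
  assumes "symp E" "induces_connected E V" "a \<in> V" "z \<in> V - component E (V - {a}) x"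
  shows "walk_in E (V - component E (V - {a}) x) z a"
proof (cases "z = a")
  case False
  let ?C = "component E (V - {a}) x"
  let ?T = "V - ?C - {a}"
  have walk_Vza: "walk_in E V z a" using assms(2-4) by (auto simp: induces_connected_iff_walk_in)
  have zT: "z \<in> ?T" and aT: "a \<notin> ?T" using False assms(4) by auto
  from walk_in_leaves[OF walk_Vza zT aT]
  obtain u z' where u: "u \<in> V \<inter> ?T" "z' \<in> V - ?T" "E u z'" and walk: "walk_in E (V \<inter> ?T) z u"
    by (elim exE conjE) (rule that; assumption)
  have "z' = a"
  proof (rule ccontr)
    assume "z' \<noteq> a"
    then have "z' \<in> ?C" using u(2) by blast
    moreover have "E z' u" using u(3) assms(1) by (simp add: sympD)
    moreover have "u \<in> V - {a}" using u(1) by blast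
    ultimately have "u \<in> ?C" by (rule component_closed)
    with u(1) show False by blast
  qed
  have "walk_in E (V - ?C) z u" by (rule walk_in_mono[OF walk]) blast
  moreover have "E u a" using u(3) \<open>z' = a\<close> by simp
  moreover have "u \<in> V - ?C" "a \<in> V - ?C" using u(1) assms(3) component_subset[of E "V - {a}" x] by auto
  ultimately show ?thesis by (rule walk_in_snoc)
qed simp

lemma induces_connected_delete_min_component:
  assumes G: "graph V E" and conn: "induces_connected E V" and a: "a \<in> V"
    and min: "\<forall>b\<in>V. \<forall>y\<in>V - {b}. card (component E (V - {a}) x) \<le> card (component E (V - {b}) y)"
    and v: "v \<in> component E (V - {a}) x"
  shows "induces_connected E (V - {v})"
proof (rule ccontr)
  let ?C = "component E (V - {a}) x"
  have sym: "symp E" using G by (rule graph_symp)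
  have C_sub: "?C \<subseteq> V - {a}" by (rule component_subset)
  then have vV: "v \<in> V" "v \<noteq> a" using v by auto
  assume "\<not> induces_connected E (V - {v})"
  then have "\<not> (\<forall>z\<in>V - {v}. walk_in E (V - {v}) a z)"
    using induces_connected_from_center[OF sym, of a "V - {v}"] a vV by auto
  then obtain y where y: "y \<in> V - {v}" "\<not> walk_in E (V - {v}) a y" by blast
  let ?C' = "component E (V - {v}) y"
  \<comment> \<open>\<open>?C'\<close> cannot reach \<open>a\<close>, hence stays inside \<open>?C - {v}\<close>, contradicting minimality.\<close>
  have C'_sub: "?C' \<subseteq> V - {v}" by (rule component_subset)
  have "?C' \<subseteq> ?C"
  proof
    fix z assume z: "z \<in> ?C'"
    show "z \<in> ?C"
    proof (rule ccontr)
      assume "z \<notin> ?C"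
      then have "z \<in> V - ?C" using z C'_sub by auto
      then have "walk_in E (V - ?C) z a" by (rule walk_outside_component[OF sym conn a])
      then have "walk_in E (V - {v}) z a" by (rule walk_in_mono) (use v in auto)
      moreover have "walk_in E (V - {v}) y z" using z by (simp add: component_def)
      ultimately have "walk_in E (V - {v}) y a" using walk_in_trans by fast
      then have "walk_in E (V - {v}) a y" by (rule walk_in_sym[OF sym])
      with y(2) show False ..
    qed
  qed
  then have "?C' \<subset> ?C" using v C'_sub by auto
  moreover have "finite ?C" using G C_sub finite_subset unfolding graph_def by auto
  ultimately have "card ?C' < card ?C" by (rule psubset_card_mono[rotated])
  moreover have "card ?C \<le> card ?C'" using min vV(1) y(1) by blast
  ultimately show False by simp
qed

lemma exists_non_separating_set:
  assumes G: "graph V E" and conn: "induces_connected E V" and "a0 \<in> V" "x0 \<in> V - {a0}"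
  shows "\<exists>a C. a \<in> V \<and> C \<noteq> {} \<and> C \<subseteq> V - {a} \<and> (\<forall>v\<in>C. induces_connected E (V - {v}))
            \<and> (\<forall>v\<in>C. \<forall>w. E v w \<longrightarrow> w \<in> C \<or> w = a)"
proof -
  obtain p where p: "fst p \<in> V" "snd p \<in> V - {fst p}"
    "\<forall>q. fst q \<in> V \<and> snd q \<in> V - {fst q} \<longrightarrow>
      card (component E (V - {fst p}) (snd p)) \<le> card (component E (V - {fst q}) (snd q))"
    using ex_has_least_nat[of "\<lambda>q. fst q \<in> V \<and> snd q \<in> V - {fst q}" "(a0, x0)"
        "\<lambda>q. card (component E (V - {fst q}) (snd q))"] assms(3,4) by auto
  define a x where "a = fst p" and "x = snd p"
  have ax: "a \<in> V" "x \<in> V - {a}" using p(1,2) unfolding a_def x_def by auto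
  have min: "\<forall>b\<in>V. \<forall>y\<in>V - {b}. card (component E (V - {a}) x) \<le> card (component E (V - {b}) y)"
  proof (intro ballI)
    fix b y assume "b \<in> V" "y \<in> V - {b}"
    then show "card (component E (V - {a}) x) \<le> card (component E (V - {b}) y)"
      using p(3)[rule_format, of "(b, y)"] unfolding a_def x_def by simp
  qed
  let ?C = "component E (V - {a}) x"
  have "w \<in> ?C \<or> w = a" if "v \<in> ?C" "E v w" for v w
  proof (cases "w = a")
    case False
    then have "w \<in> V - {a}" using G that(2) unfolding graph_def by auto
    with that show ?thesis by (blast intro: component_closed)
  qed simp
  moreover have "\<forall>v\<in>?C. induces_connected E (V - {v})"
    using induces_connected_delete_min_component[OF G conn ax(1) min] by blast
  moreover have "?C \<noteq> {}" "?C \<subseteq> V - {a}"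
    using component_self[OF ax(2)] component_subset[of E "V - {a}" x] by auto
  ultimately show ?thesis using ax(1) by blast
qed

subsection \<open>Spanning trees of the districts\<close>

text \<open>\<open>\<pi>\<close> is the parent function of a spanning tree of \<open>A\<close> rooted at \<open>\<rho>\<close>: the rank \<open>h\<close> (e.g. the
  depth) certifies that iterating \<open>\<pi>\<close> from any vertex of \<open>A\<close> ends in \<open>\<rho>\<close>.\<close>

definition parent_map :: "('a \<Rightarrow> 'a \<Rightarrow> bool) \<Rightarrow> 'a set \<Rightarrow> 'a \<Rightarrow> ('a \<Rightarrow> 'a) \<Rightarrow> bool" where
  "parent_map E A \<rho> \<pi> \<longleftrightarrow>
     \<rho> \<in> A \<and> (\<exists>h :: 'a \<Rightarrow> nat. \<forall>w\<in>A - {\<rho>}. \<pi> w \<in> A \<and> E w (\<pi> w) \<and> h (\<pi> w) < h w)"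

lemma parent_map_exists:
  assumes sym: "symp E" and conn: "induces_connected E A" and \<rho>: "\<rho> \<in> A"
  shows "\<exists>\<pi>. parent_map E A \<rho> \<pi>"
proof -
  define R where "R = (\<lambda>a b. E a b \<and> a \<in> A \<and> b \<in> A)"
  define depth where "depth w = (LEAST n. (R ^^ n) \<rho> w)" for w
  have closer: "\<exists>u. u \<in> A \<and> E w u \<and> depth u < depth w" if w: "w \<in> A - {\<rho>}" for w
  proof -
    have "R\<^sup>*\<^sup>* \<rho> w" using conn \<rho> w by (auto simp: induces_connected_def R_def)
    then obtain n where "(R ^^ n) \<rho> w" using rtranclp_imp_relpowp by metis
    then have reach: "(R ^^ depth w) \<rho> w" unfolding depth_def by (rule LeastI)
    then obtain m where m: "depth w = Suc m" using w by (cases "depth w") auto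
    then obtain u where u: "(R ^^ m) \<rho> u" "R u w" using reach by (metis relpowp_Suc_E)
    have "depth u \<le> m" unfolding depth_def using u(1) by (rule Least_le)
    with m u(2) sym show ?thesis by (auto simp: R_def dest: sympD)
  qed
  define \<pi> where "\<pi> w = (SOME u. u \<in> A \<and> E w u \<and> depth u < depth w)" for w
  have "\<pi> w \<in> A \<and> E w (\<pi> w) \<and> depth (\<pi> w) < depth w" if "w \<in> A - {\<rho>}" for w
    unfolding \<pi>_def by (rule someI_ex[OF closer[OF that]])
  then have "parent_map E A \<rho> \<pi>" unfolding parent_map_def using \<rho> by blast
  then show ?thesis by blast
qed

lemma walk_to_root_or_child:
  assumes par: "\<forall>w\<in>B - {\<rho>}. \<pi> w \<in> B \<and> E w (\<pi> w) \<and> (h (\<pi> w) :: nat) < h w"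
  shows "x \<in> B - {v} \<Longrightarrow>
    walk_in E (B - {v}) x \<rho> \<or> (\<exists>w\<in>B - {\<rho>}. \<pi> w = v \<and> walk_in E (B - {v}) x w)"
proof (induction "h x" arbitrary: x rule: less_induct)
  case less
  show ?case
  proof (cases "x = \<rho> \<or> \<pi> x = v")
    case False
    then have p: "\<pi> x \<in> B - {v}" "E x (\<pi> x)" "h (\<pi> x) < h x" using par less.prems by auto
    with less.hyps[OF p(3) p(1)] less.prems show ?thesis by (blast intro: walk_in_Cons)
  qed (use less.prems in auto)
qed

lemma card_components_delete_le:
  assumes "symp E" "parent_map E B \<rho> \<pi>" "finite B"
  shows "card (component E (B - {v}) ` (B - {v})) \<le> 1 + card {w\<in>B - {\<rho>}. \<pi> w = v}"
proof -
  let ?ch = "{w\<in>B - {\<rho>}. \<pi> w = v}"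
  let ?D = "insert \<rho> ?ch - {v}"
  obtain h :: "'a \<Rightarrow> nat" where "\<forall>w\<in>B - {\<rho>}. \<pi> w \<in> B \<and> E w (\<pi> w) \<and> h (\<pi> w) < h w"
    using assms(2) unfolding parent_map_def by blast
  note root_or_child = walk_to_root_or_child[of B \<rho> \<pi> E h, OF this]
  have "component E (B - {v}) x \<in> component E (B - {v}) ` ?D" if x: "x \<in> B - {v}" for x
  proof -
    obtain w where w: "w = \<rho> \<or> w \<in> ?ch" "walk_in E (B - {v}) x w"
      using root_or_child[OF x] by blast
    moreover have "w \<in> B - {v}" using walk_in_endpoints[OF w(2)] x by blast
    ultimately have "w \<in> ?D" by blast
    then show ?thesis using component_eq_if_walk_in[OF assms(1) w(2)] by blast
  qed
  then have "component E (B - {v}) ` (B - {v}) \<subseteq> component E (B - {v}) ` ?D" by blast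
  moreover have "finite ?D" using assms(3) by simp
  ultimately have "card (component E (B - {v}) ` (B - {v})) \<le> card (component E (B - {v}) ` ?D)"
    by (simp add: card_mono)
  also have "\<dots> \<le> card ?D" using \<open>finite ?D\<close> by (rule card_image_le)
  also have "\<dots> \<le> card (insert \<rho> ?ch)" by (rule card_Diff1_le)
  also have "\<dots> \<le> 1 + card ?ch" using assms(3) by (simp add: card_insert_if)
  finally show ?thesis .
qed

definition spanning_tree :: "('a \<Rightarrow> 'a \<Rightarrow> bool) \<Rightarrow> 'a set \<Rightarrow> 'a \<times> ('a \<Rightarrow> 'a)" where
  "spanning_tree E A = (SOME (\<rho>, \<pi>). parent_map E A \<rho> \<pi>)"

lemma parent_map_spanning_tree:
  assumes "symp E" "induces_connected E A" "spanning_tree E A = (\<rho>, \<pi>)"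
  shows "parent_map E A \<rho> \<pi>"
proof -
  obtain \<rho>0 where "\<rho>0 \<in> A" using assms(2) unfolding induces_connected_def by blast
  then obtain \<pi>0 where "parent_map E A \<rho>0 \<pi>0" using parent_map_exists[OF assms(1,2)] by blast
  then have "(\<lambda>(\<rho>, \<pi>). parent_map E A \<rho> \<pi>) (\<rho>0, \<pi>0)" by simp
  then have "(\<lambda>(\<rho>, \<pi>). parent_map E A \<rho> \<pi>) (spanning_tree E A)"
    unfolding spanning_tree_def by (rule someI)
  with assms(3) show ?thesis by simp
qed

definition tree_children :: "('a \<Rightarrow> 'a \<Rightarrow> bool) \<Rightarrow> 'a set set \<Rightarrow> 'a \<Rightarrow> 'a set" where
  "tree_children E P v = {w. \<exists>A\<in>P. case spanning_tree E A of (\<rho>, \<pi>) \<Rightarrow> w \<in> A - {\<rho>} \<and> \<pi> w = v}"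

lemma tree_childrenE:
  assumes "w \<in> tree_children E P v"
  obtains A \<rho> \<pi> where "A \<in> P" "spanning_tree E A = (\<rho>, \<pi>)" "w \<in> A - {\<rho>}" "\<pi> w = v"
proof -
  from assms have "\<exists>A\<in>P. case spanning_tree E A of (\<rho>, \<pi>) \<Rightarrow> w \<in> A - {\<rho>} \<and> \<pi> w = v"
    unfolding tree_children_def by (rule CollectD)
  then obtain A where A: "A \<in> P" "case spanning_tree E A of (\<rho>, \<pi>) \<Rightarrow> w \<in> A - {\<rho>} \<and> \<pi> w = v" ..
  obtain \<rho> \<pi> where eq: "spanning_tree E A = (\<rho>, \<pi>)" by (cases "spanning_tree E A")
  then have "w \<in> A - {\<rho>}" "\<pi> w = v" using A(2) by simp_all
  then show ?thesis by (rule that[OF A(1) eq])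
qed

lemma Part_district_unique: "P \<in> Part V E k \<Longrightarrow> A \<in> P \<Longrightarrow> B \<in> P \<Longrightarrow> x \<in> A \<Longrightarrow> x \<in> B \<Longrightarrow> A = B"
  unfolding Part_def by blast

lemma tree_children_eq:
  assumes "symp E" "P \<in> Part V E k" "A \<in> P" "v \<in> A" "spanning_tree E A = (\<rho>, \<pi>)"
  shows "tree_children E P v = {w\<in>A - {\<rho>}. \<pi> w = v}"
proof -
  have "A' = A" if "A' \<in> P" "spanning_tree E A' = (\<rho>', \<pi>')" "w \<in> A' - {\<rho>'}" "\<pi>' w = v"
    for A' \<rho>' \<pi>' w
  proof -
    have "parent_map E A' \<rho>' \<pi>'"
      using parent_map_spanning_tree[OF assms(1) _ that(2)] assms(2) that(1) by (auto simp: Part_def)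
    then have "v \<in> A'" using that(3,4) unfolding parent_map_def by blast
    then show ?thesis using Part_district_unique[OF assms(2) that(1) assms(3) _ assms(4)] by blast
  qed
  note same_district = this
  show ?thesis
  proof (intro set_eqI iffI)
    fix w assume "w \<in> tree_children E P v"
    then obtain A' \<rho>' \<pi>' where A': "A' \<in> P" "spanning_tree E A' = (\<rho>', \<pi>')" "w \<in> A' - {\<rho>'}" "\<pi>' w = v"
      by (rule tree_childrenE)
    with same_district[OF A'] assms(5) show "w \<in> {w\<in>A - {\<rho>}. \<pi> w = v}" by simp
  next
    fix w assume "w \<in> {w\<in>A - {\<rho>}. \<pi> w = v}"
    with assms(3,5) show "w \<in> tree_children E P v" unfolding tree_children_def by force
  qed
qed

lemma tree_children_adjacent:
  assumes "symp E" "P \<in> Part V E k" "w \<in> tree_children E P v"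
  shows "E v w"
proof -
  obtain A \<rho> \<pi> where A: "A \<in> P" "spanning_tree E A = (\<rho>, \<pi>)" "w \<in> A - {\<rho>}" "\<pi> w = v"
    using assms(3) by (rule tree_childrenE)
  have "parent_map E A \<rho> \<pi>"
    using parent_map_spanning_tree[OF assms(1) _ A(2)] assms(2) A(1) by (auto simp: Part_def)
  then show ?thesis using A(3,4) assms(1) unfolding parent_map_def by (auto dest: sympD)
qed

lemma tree_children_disjoint:
  assumes "P \<in> Part V E k" "v \<noteq> v'"
  shows "tree_children E P v \<inter> tree_children E P v' = {}"
proof (intro equals0I)
  fix w assume "w \<in> tree_children E P v \<inter> tree_children E P v'"
  then obtain A \<rho> \<pi> A' \<rho>' \<pi>' where
    A: "A \<in> P" "spanning_tree E A = (\<rho>, \<pi>)" "w \<in> A" "\<pi> w = v" and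
    A': "A' \<in> P" "spanning_tree E A' = (\<rho>', \<pi>')" "w \<in> A'" "\<pi>' w = v'"
    by (metis IntE tree_childrenE DiffD1)
  have "A = A'" using Part_district_unique[OF assms(1) A(1) A'(1) A(3) A'(3)] .
  with A A' assms(2) show False by simp
qed

lemma sum_card_tree_children_le:
  assumes "symp E" "P \<in> Part V E k" "finite C" "\<forall>v\<in>C. \<forall>w. E v w \<longrightarrow> w \<in> C \<or> w = a"
  shows "(\<Sum>v\<in>C. card (tree_children E P v)) \<le> card C + 1"
proof -
  have sub: "tree_children E P v \<subseteq> insert a C" if "v \<in> C" for v
    using tree_children_adjacent[OF assms(1,2)] assms(4) that by blast
  then have "\<forall>v\<in>C. finite (tree_children E P v)" using assms(3) by (meson finite_insert finite_subset)
  then have "(\<Sum>v\<in>C. card (tree_children E P v)) = card (\<Union>v\<in>C. tree_children E P v)"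
    using card_UN_disjoint[OF assms(3), of "tree_children E P"] tree_children_disjoint[OF assms(2)]
    by simp
  also have "\<dots> \<le> card (insert a C)" by (rule card_mono) (use assms(3) sub in auto)
  also have "\<dots> \<le> card C + 1" using assms(3) by (simp add: card_insert_if)
  finally show ?thesis .
qed

lemma exists_vertex_few_tree_children:
  assumes "symp E" "P1 \<in> Part V E k" "P2 \<in> Part V E k" "finite C" "C \<noteq> {}"
    "\<forall>v\<in>C. \<forall>w. E v w \<longrightarrow> w \<in> C \<or> w = a"
  shows "\<exists>v\<in>C. card (tree_children E P1 v) + card (tree_children E P2 v) \<le> 4"
proof (rule ccontr)
  assume "\<not> ?thesis"
  then have "\<forall>v\<in>C. 5 \<le> card (tree_children E P1 v) + card (tree_children E P2 v)" by auto
  then have "card C * 5 \<le> (\<Sum>v\<in>C. card (tree_children E P1 v) + card (tree_children E P2 v))"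
    using sum_bounded_below[of C 5 "\<lambda>v. card (tree_children E P1 v) + card (tree_children E P2 v)"]
    by simp
  also have "\<dots> \<le> 2 * card C + 2"
    using sum_card_tree_children_le[OF assms(1,2,4,6)] sum_card_tree_children_le[OF assms(1,3,4,6)]
    by (simp add: sum.distrib)
  finally have "card C * 5 \<le> 2 * card C + 2" .
  moreover have "card C \<noteq> 0" using assms(4,5) by simp
  ultimately show False by linarith
qed

lemma component_delete_adjacent:
  assumes "symp E" "induces_connected E B" "v \<in> B" "x \<in> B - {v}"
  shows "\<exists>y\<in>component E (B - {v}) x. E v y"
proof -
  have walk: "walk_in E B x v" using assms(2-4) by (auto simp: induces_connected_iff_walk_in)
  have "v \<notin> B - {v}" by simp
  from walk_in_leaves[OF walk assms(4) this]
  obtain u z where "u \<in> B \<inter> (B - {v})" "z \<in> B - (B - {v})" "E u z" "walk_in E (B \<inter> (B - {v})) x u"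
    by (elim exE conjE) (rule that; assumption)
  then have "u \<in> component E (B - {v}) x" "E v u"
    using assms(1) by (auto simp: component_def Int_absorb1[OF Diff_subset] dest: sympD)
  then show ?thesis ..
qed

definition reachable_within :: "('b \<Rightarrow> 'b \<Rightarrow> bool) \<Rightarrow> nat \<Rightarrow> 'b \<Rightarrow> 'b \<Rightarrow> bool" where
  "reachable_within R n x y \<longleftrightarrow> (\<exists>m\<le>n. (R ^^ m) x y)"

lemma reachable_within_refl: "reachable_within R n x x"
  unfolding reachable_within_def by (intro exI[of _ 0]) simp

lemma reachable_within_step: "R x y \<Longrightarrow> reachable_within R 1 x y"
  unfolding reachable_within_def by (intro exI[of _ 1]) auto

lemma reachable_within_mono: "reachable_within R m x y \<Longrightarrow> m \<le> n \<Longrightarrow> reachable_within R n x y"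
  unfolding reachable_within_def using le_trans by blast

lemma reachable_within_trans:
  assumes "reachable_within R m x y" "reachable_within R n y z"
  shows "reachable_within R (m + n) x z"
proof -
  obtain a b where "a \<le> m" "(R ^^ a) x y" "b \<le> n" "(R ^^ b) y z"
    using assms unfolding reachable_within_def by blast
  then have "a + b \<le> m + n" "(R ^^ (a + b)) x z" by (auto simp: relpowp_add)
  then show ?thesis unfolding reachable_within_def by blast
qed

lemma relpowp_sym: "symp R \<Longrightarrow> (R ^^ n) x y \<Longrightarrow> (R ^^ n) y x"
proof (induction n arbitrary: y)
  case (Suc n)
  from Suc.prems(2) obtain z where z: "(R ^^ n) x z" "R z y" by (rule relpowp_Suc_E)
  have "R y z" using Suc.prems(1) z(2) by (rule sympD)
  moreover have "(R ^^ n) z x" using Suc.prems(1) z(1) by (rule Suc.IH)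
  ultimately show ?case by (rule relpowp_Suc_I2)
qed simp

lemma reachable_within_sym:
  assumes "symp R" "reachable_within R n x y"
  shows "reachable_within R n y x"
proof -
  obtain m where "m \<le> n" "(R ^^ m) x y" using assms(2) unfolding reachable_within_def by blast
  then show ?thesis unfolding reachable_within_def using relpowp_sym[OF assms(1)] by blast
qed

lemma relpowp_map:
  assumes "\<And>x y. R x y \<Longrightarrow> S (f x) (f y)"
  shows "(R ^^ n) x y \<Longrightarrow> (S ^^ n) (f x) (f y)"
proof (induction n arbitrary: y)
  case (Suc n)
  from Suc.prems obtain z where z: "(R ^^ n) x z" "R z y" by (rule relpowp_Suc_E)
  from Suc.IH[OF z(1)] assms[OF z(2)] show ?case by (rule relpowp_Suc_I)
qed simp

lemma reachable_within_map:
  assumes "\<And>x y. R x y \<Longrightarrow> S (f x) (f y)" "reachable_within R n x y"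
  shows "reachable_within S n (f x) (f y)"
proof -
  obtain m where "m \<le> n" "(R ^^ m) x y" using assms(2) unfolding reachable_within_def by blast
  then show ?thesis unfolding reachable_within_def using relpowp_map[of R S f, OF assms(1)] by blast
qed

lemma recom_move_sym: "recom_move P Q \<Longrightarrow> recom_move Q P"
  unfolding recom_move_def by metis

lemma symp_R_inf: "symp (R_inf V E k)"
  unfolding R_inf_def symp_def using recom_move_sym by blast

lemma reachable_within_R_inf_Part:
  assumes "reachable_within (R_inf V E k) n P Q" "P \<in> Part V E k"
  shows "Q \<in> Part V E k"
proof -
  obtain m where "(R_inf V E k ^^ m) P Q" using assms(1) unfolding reachable_within_def by blast
  then show ?thesis using assms(2) by (cases m) (auto elim: relpowp_Suc_E simp: R_inf_def)
qed

subsection \<open>Making a vertex a singleton district\<close>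

lemma Part_replace_two:
  assumes P: "P \<in> Part V E k" and BC: "B \<in> P" "C \<in> P" "B \<noteq> C"
    and un: "B' \<union> C' = B \<union> C" and dj: "B' \<inter> C' = {}"
    and conn: "induces_connected E B'" "induces_connected E C'"
  shows "insert B' (insert C' (P - {B, C})) \<in> Part V E k"
proof -
  let ?R = "P - {B, C}"
  have Pp: "\<Union>P = V" "card P = k" "finite P" "\<forall>A\<in>P. \<forall>D\<in>P. A \<noteq> D \<longrightarrow> A \<inter> D = {}"
    "\<forall>A\<in>P. A \<noteq> {} \<and> induces_connected E A" using P unfolding Part_def by auto
  have ne: "B' \<noteq> {}" "C' \<noteq> {}" using conn unfolding induces_connected_def by auto
  have R_dj: "D \<inter> B' = {} \<and> D \<inter> C' = {}" if "D \<in> ?R" for D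
  proof -
    have "D \<inter> (B \<union> C) = {}" using that Pp(4) BC by blast
    then show ?thesis using un by blast
  qed
  then have notin: "B' \<notin> ?R" "C' \<notin> ?R" "B' \<noteq> C'" using ne dj by blast+
  have "card ?R = k - 2" using BC Pp(2,3) by (simp add: card_Diff_subset)
  moreover have "2 \<le> k" using BC Pp(2,3) card_mono[OF Pp(3), of "{B, C}"] by simp
  ultimately have "card (insert B' (insert C' ?R)) = k" using notin Pp(3) by simp
  moreover have "\<Union>(insert B' (insert C' ?R)) = V" using un Pp(1) BC by blast
  moreover have "\<forall>A\<in>insert B' (insert C' ?R). \<forall>D\<in>insert B' (insert C' ?R). A \<noteq> D \<longrightarrow> A \<inter> D = {}"
    using Pp(4) R_dj dj by (simp add: Int_commute)
  moreover have "\<forall>A\<in>insert B' (insert C' ?R). A \<noteq> {} \<and> induces_connected E A"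
    using Pp(5) ne conn by blast
  ultimately show ?thesis using Pp(3) unfolding Part_def by simp
qed

lemma recom_move_replace_two:
  assumes "B \<in> P" "C \<in> P" "B \<noteq> C" "B' \<union> C' = B \<union> C" "B' \<noteq> C'" "B' \<notin> P"
    "C' \<notin> P - {B, C}"
  shows "recom_move P (insert B' (insert C' (P - {B, C})))"
  unfolding recom_move_def
proof (intro conjI exI)
  show "P \<noteq> insert B' (insert C' (P - {B, C}))" using assms(6) by blast
  show "P - {B, C} = insert B' (insert C' (P - {B, C})) - {B', C'}" using assms(6,7) by blast
qed (use assms(1-5) in auto)

lemma R_inf_replace_two:
  assumes P: "P \<in> Part V E k" and BC: "B \<in> P" "C \<in> P" "B \<noteq> C"
    and un: "B' \<union> C' = B \<union> C" and dj: "B' \<inter> C' = {}"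
    and conn: "induces_connected E B'" "induces_connected E C'" and new: "B' \<notin> P"
  shows "R_inf V E k P (insert B' (insert C' (P - {B, C})))"
proof -
  have "B' \<noteq> {}" "C' \<noteq> {}" using conn unfolding induces_connected_def by auto
  moreover have "D \<inter> (B \<union> C) = {}" if "D \<in> P - {B, C}" for D
    using that P BC unfolding Part_def by blast
  ultimately have "C' \<notin> P - {B, C}" "B' \<noteq> C'" using un dj by blast+
  then show ?thesis unfolding R_inf_def
    using Part_replace_two[OF assms(1-8)] recom_move_replace_two[OF BC un _ new] P by blast
qed

lemma Union_Diff_member:
  assumes "pairwise disjnt \<X>" "X \<in> \<X>"
  shows "\<Union>\<X> - X = \<Union>(\<X> - {X})"
  using assms unfolding pairwise_def disjnt_def by blast

lemma exists_edge_leaving_district: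
  assumes conn: "induces_connected E (V - {v})" and k: "2 \<le> k" and P: "P \<in> Part V E k"
    and B: "B \<in> P" "v \<in> B" and x: "x \<in> B - {v}"
  shows "\<exists>u\<in>B - {v}. \<exists>z\<in>V - B. E u z"
proof -
  have Pp: "\<Union>P = V" "card P = k" "finite P" "\<forall>A\<in>P. \<forall>D\<in>P. A \<noteq> D \<longrightarrow> A \<inter> D = {}"
    "\<forall>A\<in>P. A \<noteq> {} \<and> induces_connected E A" using P unfolding Part_def by auto
  have "P \<noteq> {B}" using k Pp(2) by auto
  then obtain D where D: "D \<in> P" "D \<noteq> B" using B(1) by blast
  then obtain d where "d \<in> D" using Pp(5) by blast
  then have d: "d \<in> V - B" using D B(1) Pp(1,4) by blast
  have "x \<in> V - {v}" using x B(1) Pp(1) by blast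
  moreover have "d \<in> V - {v}" using d B(2) by blast
  ultimately have walk: "walk_in E (V - {v}) x d" using conn by (simp add: induces_connected_iff_walk_in)
  have "d \<notin> B - {v}" using d by blast
  from walk_in_leaves[OF walk x this]
  obtain u z where "u \<in> (V - {v}) \<inter> (B - {v})" "z \<in> (V - {v}) - (B - {v})" "E u z"
    by (elim exE conjE) (rule that; assumption)
  then show ?thesis by blast
qed

lemma exists_recombination_shrinking_district:
  assumes G: "graph V E" and conn: "induces_connected E (V - {v})" and k: "2 \<le> k"
    and P: "P \<in> Part V E k" and B: "B \<in> P" "v \<in> B"
    and pieces: "\<forall>X\<in>\<X>. induces_connected E X \<and> (\<exists>x\<in>X. E v x)" "pairwise disjnt \<X>"
      "\<Union>\<X> = B - {v}" and ne: "\<X> \<noteq> {}"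
  shows "\<exists>X\<in>\<X>. \<exists>Q. R_inf V E k P Q \<and> insert v (\<Union>(\<X> - {X})) \<in> Q"
proof -
  have sym: "symp E" using G by (rule graph_symp)
  have Pp: "\<Union>P = V" "\<forall>A\<in>P. \<forall>D\<in>P. A \<noteq> D \<longrightarrow> A \<inter> D = {}" "\<forall>A\<in>P. induces_connected E A"
    using P unfolding Part_def by auto
  obtain X0 where "X0 \<in> \<X>" using ne by blast
  then have "X0 \<noteq> {}" using pieces(1) induces_connected_def by blast
  then obtain x where "x \<in> B - {v}" using \<open>X0 \<in> \<X>\<close> pieces(3) by blast
  then obtain u z where u: "u \<in> B - {v}" and z: "z \<in> V - B" and "E u z"
    using exists_edge_leaving_district[OF conn k P B] by blast
  obtain C where C: "C \<in> P" "z \<in> C" using z Pp(1) by blast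
  have "C \<noteq> B" using C z by blast
  obtain X where X: "X \<in> \<X>" "u \<in> X" using u pieces(3) by blast
  have XB: "X \<subseteq> B - {v}" using X(1) pieces(3) by blast
  let ?B' = "insert v (\<Union>(\<X> - {X}))"
  have "B - X = insert v (\<Union>\<X> - X)" using pieces(3) XB B(2) by auto
  then have B'_eq: "?B' = B - X" using Union_Diff_member[OF pieces(2) X(1)] by simp
  have conn_B': "induces_connected E ?B'"
    using induces_connected_insert_Union[OF sym, of "\<X> - {X}" v] pieces(1) by blast
  have conn_CX: "induces_connected E (C \<union> X)"
    using induces_connected_Un_edge[OF sym _ _ C(2) X(2)] \<open>E u z\<close> sym Pp(3) C(1) pieces(1) X(1)
    by (simp add: sympD)
  have "B \<inter> C = {}" using Pp(2) B(1) C(1) \<open>C \<noteq> B\<close> by blast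
  then have un: "?B' \<union> (C \<union> X) = B \<union> C" and dj: "?B' \<inter> (C \<union> X) = {}"
    unfolding B'_eq using XB by blast+
  have new: "?B' \<notin> P"
  proof
    assume "?B' \<in> P"
    then have "?B' = B" using Part_district_unique[OF P _ B(1), of ?B' v] B(2) by blast
    with X(2) XB show False unfolding B'_eq by blast
  qed
  have "R_inf V E k P (insert ?B' (insert (C \<union> X) (P - {B, C})))"
    by (rule R_inf_replace_two[OF P B(1) C(1) \<open>C \<noteq> B\<close>[symmetric] un dj conn_B' conn_CX new])
  then show ?thesis using X(1) by blast
qed

lemma reachable_within_singleton_district:
  assumes G: "graph V E" and conn: "induces_connected E (V - {v})" and k: "2 \<le> k"
  shows "finite \<X> \<Longrightarrow> P \<in> Part V E k \<Longrightarrow> B \<in> P \<Longrightarrow> v \<in> B \<Longrightarrow>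
    \<forall>X\<in>\<X>. induces_connected E X \<and> (\<exists>x\<in>X. E v x) \<Longrightarrow> pairwise disjnt \<X> \<Longrightarrow> \<Union>\<X> = B - {v} \<Longrightarrow>
    \<exists>Q. {v} \<in> Q \<and> reachable_within (R_inf V E k) (card \<X>) P Q"
proof (induction "card \<X>" arbitrary: \<X> P B rule: less_induct)
  case less
  show ?case
  proof (cases "\<X> = {}")
    case True
    then have "B - {v} = {}" using less.prems(7) by simp
    then have "B = {v}" using less.prems(4) by blast
    then show ?thesis using less.prems(3) reachable_within_refl[of "R_inf V E k" "card \<X>" P] by auto
  next
    case False
    from exists_recombination_shrinking_district[OF G conn k less.prems(2-7) False]
    obtain X Q where X: "X \<in> \<X>" and Q: "R_inf V E k P Q" "insert v (\<Union>(\<X> - {X})) \<in> Q"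
      by blast
    have "card (\<X> - {X}) < card \<X>" using less.prems(1) X by (rule card_Diff1_less)
    moreover have "v \<notin> \<Union>\<X>" using less.prems(7) by blast
    ultimately obtain Q' where Q': "{v} \<in> Q'" "reachable_within (R_inf V E k) (card (\<X> - {X})) Q Q'"
      using less.hyps[of "\<X> - {X}" Q "insert v (\<Union>(\<X> - {X}))"] Q less.prems(1,5,6)
      unfolding R_inf_def by (auto intro: pairwise_subset)
    have "reachable_within (R_inf V E k) (1 + card (\<X> - {X})) P Q'"
      using reachable_within_trans[OF reachable_within_step[of "R_inf V E k", OF Q(1)] Q'(2)] .
    moreover have "1 + card (\<X> - {X}) = card \<X>"
      using less.prems(1) X card_gt_0_iff[of \<X>] by (auto simp: card_Diff_singleton)
    ultimately show ?thesis using Q'(1) by auto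
  qed
qed

lemma reachable_within_isolate_vertex:
  assumes G: "graph V E" and conn: "induces_connected E (V - {v})" and k: "2 \<le> k"
    and P: "P \<in> Part V E k" and v: "v \<in> V"
  shows "\<exists>Q. {v} \<in> Q \<and> reachable_within (R_inf V E k) (1 + card (tree_children E P v)) P Q"
proof -
  have sym: "symp E" using G by (rule graph_symp)
  have Pp: "\<Union>P = V" "\<forall>A\<in>P. induces_connected E A" using P unfolding Part_def by auto
  obtain A where A: "A \<in> P" "v \<in> A" using Pp(1) v by blast
  have A_conn: "induces_connected E A" using Pp(2) A(1) by blast
  have "finite A" using G A Pp(1) unfolding graph_def by (meson Union_upper finite_subset)
  obtain \<rho> \<pi> where tree: "spanning_tree E A = (\<rho>, \<pi>)" by (cases "spanning_tree E A")
  let ?\<X> = "component E (A - {v}) ` (A - {v})"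
  have "induces_connected E X \<and> (\<exists>x\<in>X. E v x)" if X: "X \<in> ?\<X>" for X
  proof -
    obtain x where x: "x \<in> A - {v}" "X = component E (A - {v}) x" using X by blast
    show ?thesis unfolding x(2)
      using induces_connected_component[OF sym x(1)] component_delete_adjacent[OF sym A_conn A(2) x(1)]
      by blast
  qed
  then have "\<forall>X\<in>?\<X>. induces_connected E X \<and> (\<exists>x\<in>X. E v x)" by blast
  from reachable_within_singleton_district[OF G conn k _ P A this
      pairwise_disjnt_components[OF sym] Union_components] \<open>finite A\<close>
  obtain Q where Q: "{v} \<in> Q" "reachable_within (R_inf V E k) (card ?\<X>) P Q" by blast
  have "card ?\<X> \<le> 1 + card (tree_children E P v)"
    using card_components_delete_le[OF sym parent_map_spanning_tree[OF sym A_conn tree] \<open>finite A\<close>]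
      tree_children_eq[OF sym P A tree] by simp
  with Q show ?thesis by (blast intro: reachable_within_mono[OF Q(2)])
qed

lemma exists_vertex_to_isolate:
  assumes G: "graph V E" and conn: "induces_connected E V" and k: "2 \<le> k"
    and P1: "P1 \<in> Part V E k" and P2: "P2 \<in> Part V E k"
  shows "\<exists>v\<in>V. induces_connected E (V - {v})
    \<and> card (tree_children E P1 v) + card (tree_children E P2 v) \<le> 4"
proof -
  have Pp: "\<Union>P1 = V" "card P1 = k" "finite P1" "\<forall>A\<in>P1. \<forall>D\<in>P1. A \<noteq> D \<longrightarrow> A \<inter> D = {}"
    "\<forall>A\<in>P1. A \<noteq> {}" using P1 unfolding Part_def by auto
  have "\<not> card P1 \<le> Suc 0" using k Pp(2) by simp
  then obtain A0 A1 where A: "A0 \<in> P1" "A1 \<in> P1" "A0 \<noteq> A1"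
    unfolding card_le_Suc0_iff_eq[OF Pp(3)] by blast
  obtain x0 x1 where x: "x0 \<in> A0" "x1 \<in> A1" using A Pp(5) by blast
  have "A0 \<inter> A1 = {}" using Pp(4) A by blast
  then have "x0 \<in> V" "x1 \<in> V - {x0}" using A(1,2) x Pp(1) by auto
  from exists_non_separating_set[OF G conn this]
  obtain a C where C: "C \<noteq> {}" "C \<subseteq> V - {a}" "\<forall>v\<in>C. induces_connected E (V - {v})"
    "\<forall>v\<in>C. \<forall>w. E v w \<longrightarrow> w \<in> C \<or> w = a"
    by blast
  have "finite C" using G C(2) unfolding graph_def by (meson finite_Diff finite_subset)
  then obtain v where "v \<in> C" "card (tree_children E P1 v) + card (tree_children E P2 v) \<le> 4"
    using exists_vertex_few_tree_children[OF graph_symp[OF G] P1 P2 _ C(1,4)] by blast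
  then show ?thesis using C(2,3) by blast
qed

subsection \<open>Deleting a singleton district\<close>

definition delete_vertex :: "('a \<Rightarrow> 'a \<Rightarrow> bool) \<Rightarrow> 'a \<Rightarrow> 'a \<Rightarrow> 'a \<Rightarrow> bool" where
  "delete_vertex E v x y \<longleftrightarrow> E x y \<and> x \<noteq> v \<and> y \<noteq> v"

lemma induces_connected_delete_vertex:
  assumes "v \<notin> A"
  shows "induces_connected (delete_vertex E v) A \<longleftrightarrow> induces_connected E A"
proof -
  have "(\<lambda>a b. delete_vertex E v a b \<and> a \<in> A \<and> b \<in> A) = (\<lambda>a b. E a b \<and> a \<in> A \<and> b \<in> A)"
    using assms by (auto simp: delete_vertex_def)
  then show ?thesis unfolding induces_connected_def by simp
qed

lemma connected_graph_delete_vertex: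
  assumes "graph V E" "induces_connected E (V - {v})"
  shows "connected_graph (V - {v}) (delete_vertex E v)"
  using assms induces_connected_delete_vertex[of v "V - {v}" E]
  unfolding connected_graph_def graph_def delete_vertex_def by auto

lemma Part_delete_singleton:
  assumes Q: "Q \<in> Part V E k" and v: "{v} \<in> Q"
  shows "Q - {{v}} \<in> Part (V - {v}) (delete_vertex E v) (k - 1)"
proof -
  have Qp: "\<Union>Q = V" "card Q = k" "finite Q" "\<forall>A\<in>Q. \<forall>B\<in>Q. A \<noteq> B \<longrightarrow> A \<inter> B = {}"
      "\<forall>A\<in>Q. A \<noteq> {} \<and> induces_connected E A" using Q unfolding Part_def by auto
  have nv: "v \<notin> A" if "A \<in> Q - {{v}}" for A
    using that Qp(4)[rule_format, of A "{v}"] v by auto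
  have "\<Union>(Q - {{v}}) = V - {v}" using nv Qp(1) v by auto
  moreover have "card (Q - {{v}}) = k - 1" using Qp(2) v by (simp add: card_Diff_singleton)
  moreover have "\<forall>A\<in>Q - {{v}}. A \<noteq> {} \<and> induces_connected (delete_vertex E v) A"
    using Qp(5) nv induces_connected_delete_vertex[of v _ E] by simp
  ultimately show ?thesis unfolding Part_def using Qp(3,4) by auto
qed

lemma singleton_notin_Part_delete: "R \<in> Part (V - {v}) E' k \<Longrightarrow> {v} \<notin> R"
  unfolding Part_def by blast

lemma Part_insert_singleton:
  assumes R: "R \<in> Part (V - {v}) (delete_vertex E v) k" and v: "v \<in> V"
  shows "insert {v} R \<in> Part V E (Suc k)"
proof -
  have Rp: "\<Union>R = V - {v}" "card R = k" "finite R" "\<forall>A\<in>R. \<forall>B\<in>R. A \<noteq> B \<longrightarrow> A \<inter> B = {}"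
      "\<forall>A\<in>R. A \<noteq> {} \<and> induces_connected (delete_vertex E v) A" using R unfolding Part_def by auto
  have nv: "v \<notin> A" if "A \<in> R" for A using that Rp(1) by blast
  have "induces_connected E {v}" unfolding induces_connected_def by simp
  then have "\<forall>A\<in>insert {v} R. A \<noteq> {} \<and> induces_connected E A"
    using Rp(5) nv induces_connected_delete_vertex[of v _ E] by simp
  moreover have "\<Union>(insert {v} R) = V" using Rp(1) v by auto
  moreover have "card (insert {v} R) = Suc k"
    using Rp(2,3) singleton_notin_Part_delete[OF R] by simp
  moreover have "\<forall>A\<in>insert {v} R. \<forall>B\<in>insert {v} R. A \<noteq> B \<longrightarrow> A \<inter> B = {}"
    using Rp(4) nv by auto
  ultimately show ?thesis unfolding Part_def using Rp(3) by simp
qed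

lemma recom_move_insert:
  assumes "recom_move R R'" "X \<notin> R" "X \<notin> R'"
  shows "recom_move (insert X R) (insert X R')"
proof -
  obtain A B C D where w: "A \<in> R" "B \<in> R" "A \<noteq> B" "C \<in> R'" "D \<in> R'" "C \<noteq> D"
    "A \<union> B = C \<union> D" "R - {A, B} = R' - {C, D}" and ne: "R \<noteq> R'"
    using assms(1) unfolding recom_move_def by (elim conjE exE) (rule that; assumption)
  have "insert X R \<noteq> insert X R'"
    using ne assms(2,3) by (metis insert_Diff_single insert_absorb Diff_insert_absorb)
  moreover have "insert X R - {A, B} = insert X R' - {C, D}"
  proof -
    have "insert X R - {A, B} = insert X (R - {A, B})"
      "insert X R' - {C, D} = insert X (R' - {C, D})"
      using w(1,2,4,5) assms(2,3) by auto
    then show ?thesis unfolding w(8) by (simp only:)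
  qed
  ultimately show ?thesis unfolding recom_move_def
    by (intro conjI exI[of _ A, OF exI[of _ B, OF exI[of _ C, OF exI[of _ D]]]]) (use w in auto)
qed

lemma R_inf_insert_singleton:
  assumes "v \<in> V" "R_inf (V - {v}) (delete_vertex E v) k R R'"
  shows "R_inf V E (Suc k) (insert {v} R) (insert {v} R')"
  using assms Part_insert_singleton recom_move_insert singleton_notin_Part_delete
  unfolding R_inf_def by metis

lemma Part_one: "P \<in> Part V E 1 \<Longrightarrow> P = {V}"
  unfolding Part_def by (auto simp: card_1_singleton_iff)

lemma reachable_within_Part:
  assumes "1 \<le> k" "connected_graph V E" "P1 \<in> Part V E k" "P2 \<in> Part V E k"
  shows "reachable_within (R_inf V E k) (6 * (k - 1)) P1 P2"
  using assms
proof (induction k arbitrary: V E P1 P2 rule: nat_induct_at_least)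
  case base
  then show ?case using Part_one reachable_within_refl by metis
next
  case (Suc k)
  have G: "graph V E" and conn: "induces_connected E V"
    using Suc.prems(1) unfolding connected_graph_def by auto
  obtain v where v: "v \<in> V" "induces_connected E (V - {v})"
    and few: "card (tree_children E P1 v) + card (tree_children E P2 v) \<le> 4"
    using exists_vertex_to_isolate[OF G conn _ Suc.prems(2,3)] Suc.hyps by auto
  obtain Q1 where Q1: "{v} \<in> Q1"
    "reachable_within (R_inf V E (Suc k)) (1 + card (tree_children E P1 v)) P1 Q1"
    using reachable_within_isolate_vertex[OF G v(2) _ Suc.prems(2) v(1)] Suc.hyps by auto
  obtain Q2 where Q2: "{v} \<in> Q2"
    "reachable_within (R_inf V E (Suc k)) (1 + card (tree_children E P2 v)) P2 Q2"
    using reachable_within_isolate_vertex[OF G v(2) _ Suc.prems(3) v(1)] Suc.hyps by auto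
  have "Q1 - {{v}} \<in> Part (V - {v}) (delete_vertex E v) k"
    "Q2 - {{v}} \<in> Part (V - {v}) (delete_vertex E v) k"
    using Part_delete_singleton reachable_within_R_inf_Part Suc.prems(2,3) Q1 Q2 by (metis diff_Suc_1)+
  then have "reachable_within (R_inf (V - {v}) (delete_vertex E v) k) (6 * (k - 1))
      (Q1 - {{v}}) (Q2 - {{v}})"
    using Suc.IH connected_graph_delete_vertex[OF G v(2)] by blast
  moreover have "R_inf V E (Suc k) (insert {v} R) (insert {v} R')"
    if "R_inf (V - {v}) (delete_vertex E v) k R R'" for R R'
    using R_inf_insert_singleton[OF v(1) that] .
  ultimately have "reachable_within (R_inf V E (Suc k)) (6 * (k - 1))
      (insert {v} (Q1 - {{v}})) (insert {v} (Q2 - {{v}}))"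
    using reachable_within_map by metis
  then have "reachable_within (R_inf V E (Suc k)) (6 * (k - 1)) Q1 Q2"
    using Q1(1) Q2(1) by (simp add: insert_absorb)
  with Q1(2) reachable_within_sym[OF symp_R_inf Q2(2)]
  have "reachable_within (R_inf V E (Suc k))
      ((1 + card (tree_children E P1 v)) + 6 * (k - 1) + (1 + card (tree_children E P2 v))) P1 P2"
    by (blast intro: reachable_within_trans)
  then show ?case by (rule reachable_within_mono) (use few Suc.hyps in simp)
qed

lemma recom_walk_of_relpowp:
  assumes "(R_inf V E k ^^ m) P Q" "P \<in> Part V E k"
  shows "\<exists>xs. xs \<noteq> [] \<and> hd xs = P \<and> last xs = Q \<and> set xs \<subseteq> Part V E k \<and> length xs - 1 = m
    \<and> (\<forall>i. i + 1 < length xs \<longrightarrow> recom_move (xs ! i) (xs ! (i + 1)))"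
proof -
  obtain f where f: "f 0 = P" "f m = Q" "\<forall>i<m. R_inf V E k (f i) (f (Suc i))"
    using assms(1) unfolding relpowp_fun_conv by blast
  have "f i \<in> Part V E k" if "i \<le> m" for i
  proof (cases i)
    case (Suc j)
    then show ?thesis using f(3) that unfolding R_inf_def by auto
  qed (use f(1) assms(2) in simp)
  then have "set (map f [0..<Suc m]) \<subseteq> Part V E k" by auto
  moreover have "\<forall>i. i + 1 < length (map f [0..<Suc m]) \<longrightarrow>
      recom_move (map f [0..<Suc m] ! i) (map f [0..<Suc m] ! (i + 1))"
    using f(3) unfolding R_inf_def by (simp del: upt_Suc)
  ultimately show ?thesis using f(1,2)
    by (intro exI[of _ "map f [0..<Suc m]"]) (simp add: hd_map last_map del: upt_Suc)
qed

theorem mainTheorem3: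
  fixes V :: "'a set" and E :: "'a \<Rightarrow> 'a \<Rightarrow> bool" and k :: nat
  assumes "connected_graph V E" and "k \<ge> 1"
  shows "(\<forall>P1\<in>Part V E k. \<forall>P2\<in>Part V E k.
           \<exists>xs. xs \<noteq> [] \<and> hd xs = P1 \<and> last xs = P2 \<and> set xs \<subseteq> Part V E k
              \<and> length xs - 1 \<le> 6 * (k - 1)
              \<and> (\<forall>i. i + 1 < length xs \<longrightarrow> recom_move (xs ! i) (xs ! (i + 1))))
         \<and> R_inf_connected V E k"
proof (unfold R_inf_connected_def, intro conjI ballI)
  fix P1 P2 assume P: "P1 \<in> Part V E k" "P2 \<in> Part V E k"
  from reachable_within_Part[OF assms(2,1) P] obtain m
    where m: "m \<le> 6 * (k - 1)" "(R_inf V E k ^^ m) P1 P2"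
    unfolding reachable_within_def by blast
  show "\<exists>xs. xs \<noteq> [] \<and> hd xs = P1 \<and> last xs = P2 \<and> set xs \<subseteq> Part V E k
      \<and> length xs - 1 \<le> 6 * (k - 1) \<and> (\<forall>i. i + 1 < length xs \<longrightarrow> recom_move (xs ! i) (xs ! (i + 1)))"
    using recom_walk_of_relpowp[OF m(2) P(1)] m(1) by auto
  show "(R_inf V E k)\<^sup>*\<^sup>* P1 P2" using m(2) by (rule relpowp_imp_rtranclp)
qed

end
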